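(* Let $\sigma^2>0$, let $\phi^m:\mathbb{R}^d\to\mathbb{R}^m$ and $\phi^r:\mathbb{R}^d\to\mathbb{R}^r$ be feature maps, let $\mathbf{x}_1,\ldots,\mathbf{x}_N\in\mathbb{R}^d$ be training points with $N\ge r$ such that $\Phi^{r\top}_{\mathbf{x}}\Phi^r_{\mathbf{x}}$ is invertible, and let $\mathbf{x}'_1,\ldots,\mathbf{x}'_{N'}\in\mathbb{R}^d$ be test points. Here $\Phi^r_{\mathbf{u}}$ (resp. $\Phi^m_{\mathbf{u}}$) denotes the matrix whose $i$-th row is $\phi^r(\mathbf{u}_i)^\top$ (resp. $\phi^m(\mathbf{u}_i)^\top$). Let $A:=\Phi^{m\top}_{\mathbf{x}}\Phi^r_{\mathbf{x}}(\Phi^{r\top}_{\mathbf{x}}\Phi^r_{\mathbf{x}})^{-1}\in\mathbb{R}^{m\times r}$ (the minimizer of $\sum_{i=1}^N\|\phi^m(\mathbf{x}_i)-A\phi^r(\mathbf{x}_i)\|_2^2$), let $B:=\begin{pmatrix}A\\ I_r\end{pmatrix}\in\mathbb{R}^{(m+r)\times r}$ and $\phi^B(x):=B\phi^r(x)$. Define $k^B_{\mathbf{u},\mathbf{v}}:=\Phi^r_{\mathbf{u}}B^\top B\Phi^{r\top}_{\mathbf{v}}$, $k^r_{\mathbf{u},\mathbf{v}}:=\Phi^r_{\mathbf{u}}\Phi^{r\top}_{\mathbf{v}}$, and $$S^B_{\mathbf{x}',\mathbf{x}'}:=k^B_{\mathbf{x}',\mathbf{x}'}-k^B_{\mathbf{x}',\mathbf{x}}(k^B_{\mathbf{x},\mathbf{x}}+\sigma^2I_N)^{-1}k^B_{\mathbf{x},\mathbf{x}'},\qquad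 S^{\mathrm{BLL}}_{\mathbf{x}',\mathbf{x}'}:=k^r_{\mathbf{x}',\mathbf{x}'}-k^r_{\mathbf{x}',\mathbf{x}}(k^r_{\mathbf{x},\mathbf{x}}+\sigma^2I_N)^{-1}k^r_{\mathbf{x},\mathbf{x}'}.$$ Then $S^B_{\mathbf{x}',\mathbf{x}'}\succeq S^{\mathrm{BLL}}_{\mathbf{x}',\mathbf{x}'}$ in the Loewner (positive semidefinite) order. The same holds when $\phi^B$ is replaced by the equivalent features $\phi^L(x):=L^\top\phi^r(x)$, where $LL^\top=B^\top B$ is the Cholesky decomposition.
   Context: In the motivating application, $\phi^r$ are the last-layer (Bayesian last layer) features of a trained network and $\phi^m$ are the gradients of the network output with respect to all non-last-layer parameters; $S^{\mathrm{BLL}}$ is the predictive covariance of a standard Bayesian last layer and $S^B$ that of the approximate NTK features. *)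

theory Defs
  imports "HOL-Analysis.Analysis"
begin

definition feature_matrix :: "('a \<Rightarrow> real^'k) \<Rightarrow> ('n::finite \<Rightarrow> 'a) \<Rightarrow> real^'k^'n" where
  "feature_matrix \<phi> u = (\<chi> i. \<phi> (u i))"

definition ls_matrix :: "real^'m^'n \<Rightarrow> real^'r^'n \<Rightarrow> real^'r^'m" where
  "ls_matrix Pm Pr = transpose Pm ** Pr ** matrix_inv (transpose Pr ** Pr)"

definition stack_identity :: "real^'r^'m \<Rightarrow> real^'r^('m + 'r)" where
  "stack_identity A = (\<chi> i. case i of Inl a \<Rightarrow> A $ a | Inr b \<Rightarrow> (mat 1 :: real^'r^'r) $ b)"

definition post_cov :: "real \<Rightarrow> real^'f^'n \<Rightarrow> real^'f^'t \<Rightarrow> real^'t^'t" where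
  "post_cov s2 Px Pt =
     Pt ** transpose Pt
     - Pt ** transpose Px ** matrix_inv (Px ** transpose Px + s2 *\<^sub>R mat 1) ** Px ** transpose Pt"

definition psd :: "real^'n^'n \<Rightarrow> bool" where
  "psd M \<longleftrightarrow> transpose M = M \<and> (\<forall>v. 0 \<le> v \<bullet> (M *v v))"

definition loewner_ge :: "real^'n^'n \<Rightarrow> real^'n^'n \<Rightarrow> bool" where
  "loewner_ge S T \<longleftrightarrow> psd (S - T)"

end

theory Submission
  imports Defs
begin

text \<open>
  The quadratic form of a posterior covariance is a regularised least-squares minimum:
  \<open>v\<^sup>T S v = min\<^sub>w \<parallel>\<Phi>\<^sub>t\<^sup>T v - \<Phi>\<^sub>x\<^sup>T w\<parallel>\<^sup>2 + \<sigma>\<^sup>2 \<parallel>w\<parallel>\<^sup>2\<close>,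
  obtained by completing the square in \<open>w\<close>. Replacing the features \<open>\<phi>\<close> by \<open>H\<^sup>T \<phi>\<close>
  turns the residual \<open>u\<close> into \<open>H\<^sup>T u\<close>, so if \<open>H\<^sup>T\<close> does not shrink vectors the objective
  grows pointwise in \<open>w\<close> and so does its minimum. Both \<open>B\<close> and \<open>L\<^sup>T\<close> have this property
  because \<open>\<parallel>B u\<parallel>\<^sup>2 = \<parallel>A u\<parallel>\<^sup>2 + \<parallel>u\<parallel>\<^sup>2\<close>. In particular the inequality holds for every \<open>A\<close>.
\<close>

lemma transpose_diff: "transpose (A - B) = transpose A - (transpose B :: 'a::ab_group_add^'n^'m)"
  by (simp add: transpose_def vec_eq_iff)

lemma inner_matrix_vector_mult: "(x::real^'m) \<bullet> (A *v y) = (transpose A *v x) \<bullet> y"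
  by (subst transpose_matrix_vector) (rule dot_lmul_matrix[symmetric])

lemma power2_norm_transpose_matrix_vector_mult:
  "norm (transpose M *v u) ^ 2 = (u::real^'n) \<bullet> ((M ** transpose M) *v u)"
  by (simp add: power2_norm_eq_inner inner_matrix_vector_mult
      flip: matrix_vector_mul_assoc del: transpose_matrix_vector)

lemma matrix_inv_right:
  assumes "invertible (A::'a::semiring_1^'n^'n)"
  shows "A ** matrix_inv A = mat 1"
proof -
  have "\<exists>A'. A ** A' = mat 1 \<and> A' ** A = mat 1"
    using assms invertible_def by blast
  then have "A ** matrix_inv A = mat 1 \<and> matrix_inv A ** A = mat 1"
    unfolding matrix_inv_def by (rule someI_ex)
  then show ?thesis ..
qed

lemma transpose_matrix_inv_symmetric:
  fixes A :: "'a::comm_semiring_1^'n^'n"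
  assumes "invertible A" and "transpose A = A"
  shows "transpose (matrix_inv A) = matrix_inv A"
proof -
  have "transpose (matrix_inv A) ** A = mat 1"
    by (metis assms matrix_inv_right matrix_transpose_mul transpose_mat)
  then show ?thesis
    by (metis assms(1) matrix_inv_right matrix_mul_assoc matrix_mul_lid matrix_mul_rid)
qed

definition ridge_gram :: "real \<Rightarrow> real^'f^'n \<Rightarrow> real^'n^'n" where
  "ridge_gram s P = P ** transpose P + s *\<^sub>R mat 1"

lemma transpose_ridge_gram: "transpose (ridge_gram s P) = ridge_gram s P"
  by (simp add: ridge_gram_def transpose_def vec_eq_iff matrix_matrix_mult_def mat_def
      mult.commute)

lemma inner_ridge_gram:
  "w \<bullet> (ridge_gram s P *v w) = norm (transpose P *v w) ^ 2 + s * norm w ^ 2"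
  unfolding ridge_gram_def matrix_vector_mult_add_rdistrib inner_add_right
    power2_norm_transpose_matrix_vector_mult
  by (simp add: power2_norm_eq_inner flip: scaleR_matrix_vector_assoc)

lemma inner_ridge_gram_nonneg: "s \<ge> 0 \<Longrightarrow> 0 \<le> w \<bullet> (ridge_gram s P *v w)"
  by (simp add: inner_ridge_gram)

lemma invertible_ridge_gram:
  assumes "s > 0"
  shows "invertible (ridge_gram s P)"
proof -
  have "w = 0" if "ridge_gram s P *v w = 0" for w
  proof -
    have "norm (transpose P *v w) ^ 2 + s * norm w ^ 2 = 0"
      using that inner_ridge_gram[of w s P] by simp
    then show "w = 0"
      using assms by (simp add: add_nonneg_eq_0_iff)
  qed
  then show ?thesis
    using matrix_left_invertible_ker invertible_left_inverse by blast
qed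

lemma post_cov_ridge_gram:
  "post_cov s P Q = Q ** transpose Q - Q ** transpose P ** matrix_inv (ridge_gram s P) ** P ** transpose Q"
  by (simp add: post_cov_def ridge_gram_def)

definition ridge_loss :: "real \<Rightarrow> real^'f^'n \<Rightarrow> real^'f^'t \<Rightarrow> real^'t \<Rightarrow> real^'n \<Rightarrow> real" where
  "ridge_loss s P Q v w = norm (transpose Q *v v - transpose P *v w) ^ 2 + s * norm w ^ 2"

lemma ridge_loss_completed_square:
  fixes P :: "real^'f^'n" and Q :: "real^'f^'t" and v :: "real^'t" and w :: "real^'n"
  assumes "s > 0"
  defines "G \<equiv> ridge_gram s P"
    and "w\<^sub>0 \<equiv> matrix_inv (ridge_gram s P) *v (P *v (transpose Q *v v))"
  shows "ridge_loss s P Q v w = v \<bullet> (post_cov s P Q *v v) + (w - w\<^sub>0) \<bullet> (G *v (w - w\<^sub>0))"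
proof -
  define a where "a = transpose Q *v v"
  define b where "b = P *v a"
  have G_inv: "G ** matrix_inv G = mat 1"
    unfolding G_def using assms(1) by (intro matrix_inv_right invertible_ridge_gram)
  have "G *v w\<^sub>0 = (G ** matrix_inv G) *v b"
    unfolding w\<^sub>0_def G_def[symmetric] a_def[symmetric] b_def[symmetric]
    by (rule matrix_vector_mul_assoc)
  then have G_w0: "G *v w\<^sub>0 = b"
    by (simp add: G_inv)
  have G_sym: "transpose G = G"
    unfolding G_def by (rule transpose_ridge_gram)
  have v_Q: "v \<bullet> (Q *v x) = a \<bullet> x" for x
    unfolding a_def by (rule inner_matrix_vector_mult)
  have a_P: "a \<bullet> (transpose P *v x) = x \<bullet> b" for x
    unfolding b_def by (metis inner_commute inner_matrix_vector_mult transpose_transpose)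
  have post_cov_form: "v \<bullet> (post_cov s P Q *v v) = a \<bullet> a - w\<^sub>0 \<bullet> b"
  proof -
    have "post_cov s P Q *v v = Q *v a - Q *v (transpose P *v w\<^sub>0)"
      by (simp add: post_cov_ridge_gram matrix_vector_mult_diff_rdistrib a_def w\<^sub>0_def
          del: transpose_matrix_vector vector_transpose_matrix flip: matrix_vector_mul_assoc)
    then show ?thesis
      by (simp only: inner_diff_right v_Q a_P)
  qed
  have loss_form: "ridge_loss s P Q v w = a \<bullet> a - 2 * (w \<bullet> b) + w \<bullet> (G *v w)"
    unfolding ridge_loss_def G_def inner_ridge_gram a_def[symmetric] power2_norm_eq_inner
    by (simp only: inner_diff_left inner_diff_right a_P inner_commute[of "transpose P *v w" a])
  have square_form: "(w - w\<^sub>0) \<bullet> (G *v (w - w\<^sub>0)) = w \<bullet> (G *v w) - 2 * (w \<bullet> b) + w\<^sub>0 \<bullet> b"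
  proof -
    have "w\<^sub>0 \<bullet> (G *v w) = w \<bullet> b"
      by (metis G_sym G_w0 inner_commute inner_matrix_vector_mult)
    then show ?thesis
      by (simp only: matrix_vector_mult_diff_distrib inner_diff_left inner_diff_right G_w0
          inner_commute[of w\<^sub>0 b])
  qed
  show ?thesis
    unfolding loss_form post_cov_form square_form by simp
qed

lemma post_cov_le_ridge_loss:
  "s > 0 \<Longrightarrow> v \<bullet> (post_cov s P Q *v v) \<le> ridge_loss s P Q v w"
  by (simp add: ridge_loss_completed_square inner_ridge_gram_nonneg)

lemma post_cov_eq_ridge_loss:
  "s > 0 \<Longrightarrow> \<exists>w. v \<bullet> (post_cov s P Q *v v) = ridge_loss s P Q v w"
  by (rule exI[of _ "matrix_inv (ridge_gram s P) *v (P *v (transpose Q *v v))"])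
    (simp add: ridge_loss_completed_square del: transpose_matrix_vector vector_transpose_matrix)

lemma transpose_post_cov:
  assumes "s > 0"
  shows "transpose (post_cov s P Q) = post_cov s P Q"
proof -
  have "transpose (matrix_inv (ridge_gram s P)) = matrix_inv (ridge_gram s P)"
    using assms by (intro transpose_matrix_inv_symmetric invertible_ridge_gram transpose_ridge_gram)
  then show ?thesis
    by (simp add: post_cov_ridge_gram transpose_diff matrix_transpose_mul matrix_mul_assoc)
qed

lemma loewner_ge_post_cov_mult_features:
  fixes P :: "real^'r^'n" and Q :: "real^'r^'t" and H :: "real^'k^'r"
  assumes "s > 0" and expanding: "\<And>u. norm u \<le> norm (transpose H *v u)"
  shows "loewner_ge (post_cov s (P ** H) (Q ** H)) (post_cov s P Q)"
  unfolding loewner_ge_def psd_def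
proof (intro conjI allI)
  show "transpose (post_cov s (P ** H) (Q ** H) - post_cov s P Q)
      = post_cov s (P ** H) (Q ** H) - post_cov s P Q"
    by (simp add: transpose_diff transpose_post_cov[OF assms(1)])
next
  fix v :: "real^'t"
  obtain w where w: "v \<bullet> (post_cov s (P ** H) (Q ** H) *v v) = ridge_loss s (P ** H) (Q ** H) v w"
    using post_cov_eq_ridge_loss[OF assms(1)] by blast
  have residual: "transpose (Q ** H) *v v - transpose (P ** H) *v w
      = transpose H *v (transpose Q *v v - transpose P *v w)"
    by (simp only: matrix_transpose_mul matrix_vector_mult_diff_distrib matrix_vector_mul_assoc)
  have "v \<bullet> (post_cov s P Q *v v) \<le> ridge_loss s P Q v w"
    by (rule post_cov_le_ridge_loss[OF assms(1)])
  also have "\<dots> \<le> ridge_loss s (P ** H) (Q ** H) v w"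
    unfolding ridge_loss_def residual using expanding by (simp add: power_mono)
  also have "\<dots> = v \<bullet> (post_cov s (P ** H) (Q ** H) *v v)"
    by (rule w[symmetric])
  finally show "0 \<le> v \<bullet> ((post_cov s (P ** H) (Q ** H) - post_cov s P Q) *v v)"
    by (simp add: matrix_vector_mult_diff_rdistrib inner_diff_right)
qed

lemma power2_norm_stack_identity_mult:
  "norm (stack_identity A *v u) ^ 2 = norm (A *v u) ^ 2 + norm (u::real^'r) ^ 2"
proof -
  have Inl: "(stack_identity A *v u) $ Inl i = (A *v u) $ i"
    and Inr: "(stack_identity A *v u) $ Inr j = u $ j" for i j
    by (simp_all add: stack_identity_def matrix_vector_mult_def mat_def if_distrib if_distribR
        cong: if_cong)
  let ?Bu = "stack_identity A *v u"
  have "norm ?Bu ^ 2 = (\<Sum>i \<in> UNIV <+> UNIV. ?Bu $ i * ?Bu $ i)"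
    by (simp add: power2_norm_eq_inner inner_vec_def)
  also have "\<dots> = (\<Sum>i\<in>UNIV. (A *v u) $ i * (A *v u) $ i) + (\<Sum>j\<in>UNIV. u $ j * u $ j)"
    by (subst sum.Plus) (simp_all add: Inl Inr)
  finally show ?thesis
    by (simp add: power2_norm_eq_inner inner_vec_def)
qed

lemma norm_transpose_matrix_vector_mult_eq:
  assumes "M ** transpose M = N ** transpose N"
  shows "norm (transpose M *v u) = norm (transpose N *v (u::real^'n))"
  using assms power2_norm_transpose_matrix_vector_mult[of M u]
    power2_norm_transpose_matrix_vector_mult[of N u]
  by (metis norm_ge_zero power2_eq_imp_eq)

theorem theorem3p3:
  fixes \<sigma>2 :: real
    and \<phi>m :: "real^'d \<Rightarrow> real^'m"
    and \<phi>r :: "real^'d \<Rightarrow> real^'r"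
    and xs :: "'n::finite \<Rightarrow> real^'d"
    and xt :: "'t::finite \<Rightarrow> real^'d"
  assumes "\<sigma>2 > 0"
    and "CARD('n) \<ge> CARD('r)"
    and "invertible (transpose (feature_matrix \<phi>r xs) ** feature_matrix \<phi>r xs)"
  shows "loewner_ge
           (post_cov \<sigma>2
              (feature_matrix \<phi>r xs ** transpose (stack_identity (ls_matrix (feature_matrix \<phi>m xs) (feature_matrix \<phi>r xs))))
              (feature_matrix \<phi>r xt ** transpose (stack_identity (ls_matrix (feature_matrix \<phi>m xs) (feature_matrix \<phi>r xs)))))
           (post_cov \<sigma>2 (feature_matrix \<phi>r xs) (feature_matrix \<phi>r xt))
       \<and> (\<forall>L :: real^'r^'r.
            L ** transpose L =
              transpose (stack_identity (ls_matrix (feature_matrix \<phi>m xs) (feature_matrix \<phi>r xs)))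
              ** stack_identity (ls_matrix (feature_matrix \<phi>m xs) (feature_matrix \<phi>r xs))
            \<longrightarrow> loewner_ge
                  (post_cov \<sigma>2 (feature_matrix \<phi>r xs ** L) (feature_matrix \<phi>r xt ** L))
                  (post_cov \<sigma>2 (feature_matrix \<phi>r xs) (feature_matrix \<phi>r xt)))"
proof -
  let ?B = "stack_identity (ls_matrix (feature_matrix \<phi>m xs) (feature_matrix \<phi>r xs))"
  have B_expanding: "norm u \<le> norm (?B *v u)" for u
    by (rule power2_le_imp_le) (simp_all add: power2_norm_stack_identity_mult)
  have L_expanding: "norm u \<le> norm (transpose L *v u)"
    if "L ** transpose L = transpose ?B ** ?B" for L :: "real^'r^'r" and u
    using B_expanding norm_transpose_matrix_vector_mult_eq[of L "transpose ?B"] that by simp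
  show ?thesis
    by (intro conjI allI impI loewner_ge_post_cov_mult_features[OF assms(1)])
      (auto intro: B_expanding L_expanding simp del: transpose_matrix_vector)
qed

end
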